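(* There exists a $2$-regular curve in $\mathbb{E}^4$ which does not admit a generalized Bishop frame of type F.
   Context: A regular curve $\gamma: I\to\mathbb{E}^4$ ($I$ an open interval) is considered with arc-length parametrization; $\mathbb{T}=\gamma'$ is its unit tangent vector. It is $2$-regular if $\mathbb{T}'$ is nowhere vanishing. A frame on $\gamma$ is an ordered orthonormal frame $(\mathbb{T},\mathbb{Z}_1,\mathbb{Z}_2,\mathbb{Z}_3)$ of smooth vector fields along $\gamma$ whose first vector is $\mathbb{T}$; it is identified with the smooth map $\mathbb{Z}: I\to O(4)$ whose rows are these vectors. Its coefficient matrix is the $\mathfrak{o}(4)$-valued function $X$ with $\mathbb{Z}'=X\mathbb{Z}$. A frame is of type F if, after possibly permuting $\mathbb{Z}_1,\mathbb{Z}_2,\mathbb{Z}_3$ (keeping $\mathbb{T}$ first), its coefficient matrix has the form $\begin{pmatrix}0&x_1&0&0\\-x_1&0&x_2&0\\0&-x_2&0&x_3\\0&0&-x_3&0\end{pmatrix}$ for some smooth functions $x_1,x_2,x_3$ (no sign conditions). *)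

theory Defs
  imports "HOL-Analysis.Analysis"
begin

definition smooth_on :: "real set \<Rightarrow> (real \<Rightarrow> 'a::real_normed_vector) \<Rightarrow> bool" where
  "smooth_on S f \<longleftrightarrow> (\<exists>D :: nat \<Rightarrow> real \<Rightarrow> 'a.
      (\<forall>t\<in>S. D 0 t = f t) \<and>
      (\<forall>n. \<forall>t\<in>S. (D n has_vector_derivative D (Suc n) t) (at t)))"

definition open_interval :: "real set \<Rightarrow> bool" where
  "open_interval I \<longleftrightarrow> open I \<and> is_interval I \<and> I \<noteq> {}"

definition unit_speed_curve :: "real set \<Rightarrow> (real \<Rightarrow> real^4) \<Rightarrow> bool" where
  "unit_speed_curve I \<gamma> \<longleftrightarrow> open_interval I \<and> smooth_on I \<gamma> \<and>
     (\<forall>t\<in>I. norm (vector_derivative \<gamma> (at t)) = 1)"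

definition tangent :: "(real \<Rightarrow> real^4) \<Rightarrow> real \<Rightarrow> real^4" where
  "tangent \<gamma> t = vector_derivative \<gamma> (at t)"

definition two_regular :: "real set \<Rightarrow> (real \<Rightarrow> real^4) \<Rightarrow> bool" where
  "two_regular I \<gamma> \<longleftrightarrow> unit_speed_curve I \<gamma> \<and>
     (\<forall>t\<in>I. vector_derivative (tangent \<gamma>) (at t) \<noteq> 0)"

definition is_frame :: "real set \<Rightarrow> (real \<Rightarrow> real^4) \<Rightarrow> (nat \<Rightarrow> real \<Rightarrow> real^4) \<Rightarrow> bool" where
  "is_frame I \<gamma> Z \<longleftrightarrow>
     (\<forall>t\<in>I. Z 0 t = tangent \<gamma> t) \<and>
     (\<forall>i<4. smooth_on I (Z i)) \<and>
     (\<forall>t\<in>I. \<forall>i<4. \<forall>j<4. inner (Z i t) (Z j t) = (if i = j then 1 else 0))"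

text \<open>X is the coefficient matrix of Z: Z' = X Z, i.e. row i of Z' equals
  sum_j X_ij (row j of Z).\<close>
definition coeff_matrix :: "real set \<Rightarrow> (nat \<Rightarrow> real \<Rightarrow> real^4) \<Rightarrow> (real \<Rightarrow> nat \<Rightarrow> nat \<Rightarrow> real) \<Rightarrow> bool" where
  "coeff_matrix I Z X \<longleftrightarrow>
     (\<forall>t\<in>I. \<forall>i<4. (Z i has_vector_derivative (\<Sum>j<4. X t i j *\<^sub>R Z j t)) (at t))"

definition F_matrix :: "real \<Rightarrow> real \<Rightarrow> real \<Rightarrow> nat \<Rightarrow> nat \<Rightarrow> real" where
  "F_matrix x1 x2 x3 i j =
     (if i = 0 \<and> j = 1 then x1 else if i = 1 \<and> j = 0 then - x1
      else if i = 1 \<and> j = 2 then x2 else if i = 2 \<and> j = 1 then - x2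
      else if i = 2 \<and> j = 3 then x3 else if i = 3 \<and> j = 2 then - x3
      else 0)"

text \<open>Frame of type F: after permuting Z1,Z2,Z3 (T stays first), the coefficient
  matrix has the F form for some smooth x1, x2, x3 (no sign conditions).\<close>
definition frame_type_F :: "real set \<Rightarrow> (real \<Rightarrow> real^4) \<Rightarrow> (nat \<Rightarrow> real \<Rightarrow> real^4) \<Rightarrow> bool" where
  "frame_type_F I \<gamma> Z \<longleftrightarrow> is_frame I \<gamma> Z \<and>
     (\<exists>\<sigma> x1 x2 x3. \<sigma> permutes {1,2,3} \<and>
        smooth_on I x1 \<and> smooth_on I x2 \<and> smooth_on I x3 \<and>
        coeff_matrix I (\<lambda>i. Z (\<sigma> i)) (\<lambda>t. F_matrix (x1 t) (x2 t) (x3 t)))"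

end

(*
  A frame of type F starts like a Frenet frame: for suitable frame vectors Z1, Z2 it satisfies
  T' = x1 Z1 and Z1' = -x1 T + x2 Z2, and x1 does not vanish because the curve is 2-regular.
  So if a constant vector v is orthogonal to T on an open interval on which T'' is not in
  span {T, T'}, differentiating <T, v> = 0 twice shows that v is orthogonal to Z1, and, since
  x2 = 0 would put T'' into span {T, T'}, also to Z2.

  The counterexample has unit tangent
    T s = cos (h s + k s) (cos s e1 + sin s e2) + sin (h s) e3 + sin (k s) e4,
  where h s = exp (-1/s) for s > 0 and 0 otherwise, and k s = h (-s). For s > 0 this is a
  latitude curve on the unit sphere of span {e1, e2, e3}, for s < 0 one on the sphere of
  span {e1, e2, e4}, and in both cases T'' is never in span {T, T'}. Hence Z1 and Z2 are
  orthogonal to e4 just right of 0 and to e3 just left of 0. By continuity Z1 0 and Z2 0 are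
  orthonormal vectors orthogonal to e3, e4 and to T 0 = e1, which is impossible in E^4.
*)

theory Submission
  imports Defs
begin

lemma binomial_Suc_if: "Suc n choose k = (n choose k) + (if k = 0 then 0 else (n choose (k-1)))"
  by (cases k) simp_all

lemma smooth_on_coinduct:
  fixes f :: "real \<Rightarrow> 'a::real_normed_vector"
  assumes "P f"
    and step: "\<And>g. P g \<Longrightarrow> \<exists>g'. P g' \<and> (\<forall>t\<in>S. (g has_vector_derivative g' t) (at t))"
  shows "smooth_on S f"
proof -
  define der where "der g = (SOME g'. P g' \<and> (\<forall>t\<in>S. (g has_vector_derivative g' t) (at t)))" for g
  have der: "P (der g) \<and> (\<forall>t\<in>S. (g has_vector_derivative der g t) (at t))" if "P g" for g
    unfolding der_def using someI_ex[OF step[OF that]] .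
  have "P ((der ^^ n) f)" for n
    by (induction n) (auto simp: assms der)
  then show ?thesis
    unfolding smooth_on_def by (intro exI[of _ "\<lambda>n. (der ^^ n) f"]) (simp add: der)
qed

lemma smooth_on_derivative:
  fixes f :: "real \<Rightarrow> 'a::real_normed_vector"
  assumes "smooth_on S f" "open S"
  obtains f' where "smooth_on S f'" "\<And>t. t \<in> S \<Longrightarrow> (f has_vector_derivative f' t) (at t)"
proof -
  obtain D where D0: "\<forall>t\<in>S. D 0 t = f t" and DS: "\<forall>n. \<forall>t\<in>S. (D n has_vector_derivative D (Suc n) t) (at t)"
    using assms(1) unfolding smooth_on_def by blast
  have "smooth_on S (D (Suc 0))"
    unfolding smooth_on_def using DS by (intro exI[of _ "\<lambda>n. D (Suc n)"]) simp
  moreover have "(f has_vector_derivative D (Suc 0) t) (at t)" if "t \<in> S" for t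
  proof -
    have "(D 0 has_vector_derivative D (Suc 0) t) (at t)" using DS that by blast
    then show ?thesis
      by (rule has_vector_derivative_transform_within_open[OF _ assms(2) that]) (use D0 in auto)
  qed
  ultimately show ?thesis by (rule that)
qed

lemma smooth_on_real_derivative:
  fixes f :: "real \<Rightarrow> real"
  assumes "smooth_on S f" "open S"
  obtains f' where "smooth_on S f'" "\<And>t. t \<in> S \<Longrightarrow> (f has_real_derivative f' t) (at t)"
  using smooth_on_derivative[OF assms] that
  unfolding has_real_derivative_iff_has_vector_derivative by metis

lemma smooth_on_const: "smooth_on S (\<lambda>t. c)"
  unfolding smooth_on_def by (intro exI[of _ "\<lambda>n t. if n = 0 then c else 0"]) auto

lemma smooth_on_id: "smooth_on S (\<lambda>t. t)"
  unfolding smooth_on_def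
proof (intro exI[of _ "\<lambda>n t. if n = 0 then t else if n = 1 then 1 else 0"] conjI allI ballI)
  show "((\<lambda>t. if n = 0 then t else if n = 1 then 1 else 0) has_vector_derivative
      (if Suc n = 0 then t else if Suc n = 1 then 1 else 0)) (at t)" for n :: nat and t
    by (cases "n = 0") auto
qed simp

lemma smooth_on_add:
  fixes f g :: "real \<Rightarrow> 'a::real_normed_vector"
  assumes "smooth_on S f" "smooth_on S g"
  shows "smooth_on S (\<lambda>t. f t + g t)"
proof -
  obtain Df Dg where "\<forall>t\<in>S. Df 0 t = f t" "\<forall>n. \<forall>t\<in>S. (Df n has_vector_derivative Df (Suc n) t) (at t)"
    "\<forall>t\<in>S. Dg 0 t = g t" "\<forall>n. \<forall>t\<in>S. (Dg n has_vector_derivative Dg (Suc n) t) (at t)"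
    using assms unfolding smooth_on_def by blast
  then show ?thesis
    unfolding smooth_on_def
    by (intro exI[of _ "\<lambda>n t. Df n t + Dg n t"]) (auto intro!: derivative_eq_intros)
qed

lemma binomial_sum_Suc_scaleR:
  fixes a :: "nat \<Rightarrow> real" and b :: "nat \<Rightarrow> 'a::real_vector"
  shows "(\<Sum>i\<le>Suc n. (real (Suc n choose i) * a i) *\<^sub>R b (Suc n - i))
    = (\<Sum>i\<le>n. (real (n choose i) * a i) *\<^sub>R b (Suc (n - i)) + (real (n choose i) * a (Suc i)) *\<^sub>R b (n - i))"
proof -
  have "(\<Sum>i\<le>Suc n. (real (Suc n choose i) * a i) *\<^sub>R b (Suc n - i))
      = (\<Sum>i\<le>Suc n. (real (n choose i) * a i) *\<^sub>R b (Suc n - i))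
      + (\<Sum>i\<le>Suc n. (real (if i = 0 then 0 else n choose (i - 1)) * a i) *\<^sub>R b (Suc n - i))"
    by (simp add: binomial_Suc_if distrib_right scaleR_add_left sum.distrib)
  also have "(\<Sum>i\<le>Suc n. (real (n choose i) * a i) *\<^sub>R b (Suc n - i))
      = (\<Sum>i\<le>n. (real (n choose i) * a i) *\<^sub>R b (Suc (n - i)))"
    by (simp add: Suc_diff_le)
  also have "(\<Sum>i\<le>Suc n. (real (if i = 0 then 0 else n choose (i - 1)) * a i) *\<^sub>R b (Suc n - i))
      = (\<Sum>i\<le>n. (real (n choose i) * a (Suc i)) *\<^sub>R b (n - i))"
    by (subst sum.atMost_Suc_shift) simp
  finally show ?thesis
    by (simp add: sum.distrib)
qed

lemma smooth_on_scaleR: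
  fixes g :: "real \<Rightarrow> 'a::real_normed_vector"
  assumes "smooth_on S f" "smooth_on S g"
  shows "smooth_on S (\<lambda>t. f t *\<^sub>R g t)"
proof -
  obtain Df Dg where Df0: "\<forall>t\<in>S. Df 0 t = f t"
    and Df: "\<forall>n. \<forall>t\<in>S. (Df n has_real_derivative Df (Suc n) t) (at t)"
    and Dg0: "\<forall>t\<in>S. Dg 0 t = g t" and Dg: "\<forall>n. \<forall>t\<in>S. (Dg n has_vector_derivative Dg (Suc n) t) (at t)"
    using assms unfolding smooth_on_def has_real_derivative_iff_has_vector_derivative by blast
  define D where "D n t = (\<Sum>i\<le>n. (real (n choose i) * Df i t) *\<^sub>R Dg (n - i) t)" for n t
  have "(D n has_vector_derivative D (Suc n) t) (at t)" if "t \<in> S" for n t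
  proof -
    have "D (Suc n) t = (\<Sum>i\<le>n. (real (n choose i) * Df i t) *\<^sub>R Dg (Suc (n - i)) t
        + (real (n choose i) * Df (Suc i) t) *\<^sub>R Dg (n - i) t)"
      unfolding D_def by (rule binomial_sum_Suc_scaleR)
    then show ?thesis
      unfolding D_def using Df Dg that
      by (simp only:) (intro has_vector_derivative_sum has_vector_derivative_scaleR DERIV_cmult; simp)
  qed
  moreover have "D 0 t = f t *\<^sub>R g t" if "t \<in> S" for t
    using Df0 Dg0 that by (simp add: D_def)
  ultimately show ?thesis
    unfolding smooth_on_def by blast
qed

lemma smooth_on_mult:
  fixes f g :: "real \<Rightarrow> real"
  shows "smooth_on S f \<Longrightarrow> smooth_on S g \<Longrightarrow> smooth_on S (\<lambda>t. f t * g t)"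
  using smooth_on_scaleR[of S f g] by simp

lemma smooth_on_minus:
  fixes f :: "real \<Rightarrow> 'a::real_normed_vector"
  shows "smooth_on S f \<Longrightarrow> smooth_on S (\<lambda>t. - f t)"
  using smooth_on_scaleR[OF smooth_on_const, of S f "- 1"] by simp

lemma smooth_on_reflect:
  fixes f :: "real \<Rightarrow> 'a::real_normed_vector"
  assumes "smooth_on UNIV f"
  shows "smooth_on UNIV (\<lambda>t. f (- t))"
proof (rule smooth_on_coinduct[of "\<lambda>g. \<exists>f. smooth_on UNIV f \<and> g = (\<lambda>t. f (- t))"])
  fix g assume "\<exists>f. smooth_on UNIV f \<and> g = (\<lambda>t. f (- t))"
  then obtain f where f: "smooth_on UNIV f" "g = (\<lambda>t. f (- t))" by blast
  obtain f' where f': "smooth_on UNIV f'" "\<And>t. (f has_vector_derivative f' t) (at t)"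
    by (rule smooth_on_derivative[OF f(1) open_UNIV]) simp
  have "(g has_vector_derivative - f' (- t)) (at t)" for t
    unfolding f(2) using vector_diff_chain_at[OF _ f'(2), of uminus "- 1" t]
    by (simp add: o_def has_vector_derivative_minus[OF has_vector_derivative_id])
  moreover have "smooth_on UNIV (\<lambda>t. - f' t)"
    using f'(1) by (rule smooth_on_minus)
  ultimately show "\<exists>g'. (\<exists>f. smooth_on UNIV f \<and> g' = (\<lambda>t. f (- t))) \<and> (\<forall>t\<in>UNIV. (g has_vector_derivative g' t) (at t))"
    by (intro exI[of _ "\<lambda>t. - f' (- t)"] conjI exI[of _ "\<lambda>t. - f' t"]) auto
qed (use assms in auto)

lemma smooth_on_sin_cos:
  fixes h :: "real \<Rightarrow> real"
  assumes "smooth_on S h" "open S"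
  shows "smooth_on S (\<lambda>t. sin (h t))" "smooth_on S (\<lambda>t. cos (h t))"
proof -
  obtain h' where h': "smooth_on S h'" "\<And>t. t \<in> S \<Longrightarrow> (h has_real_derivative h' t) (at t)"
    using smooth_on_real_derivative[OF assms] by metis
  let ?P = "\<lambda>g. \<exists>a b. smooth_on S a \<and> smooth_on S b \<and> g = (\<lambda>t. a t * sin (h t) + b t * cos (h t))"
  have step: "\<exists>g'. ?P g' \<and> (\<forall>t\<in>S. (g has_vector_derivative g' t) (at t))" if "?P g" for g
  proof -
    obtain a b where ab: "smooth_on S a" "smooth_on S b" "g = (\<lambda>t. a t * sin (h t) + b t * cos (h t))"
      using \<open>?P g\<close> by blast
    obtain a' where a': "smooth_on S a'" "\<And>t. t \<in> S \<Longrightarrow> (a has_real_derivative a' t) (at t)"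
      using smooth_on_real_derivative[OF ab(1) assms(2)] by metis
    obtain b' where b': "smooth_on S b'" "\<And>t. t \<in> S \<Longrightarrow> (b has_real_derivative b' t) (at t)"
      using smooth_on_real_derivative[OF ab(2) assms(2)] by metis
    let ?g' = "\<lambda>t. (a' t + - (b t * h' t)) * sin (h t) + (a t * h' t + b' t) * cos (h t)"
    have "?P ?g'"
      using ab a' b' h'
      by (intro exI[of _ "\<lambda>t. a' t + - (b t * h' t)"] exI[of _ "\<lambda>t. a t * h' t + b' t"]
          conjI smooth_on_add smooth_on_minus smooth_on_mult refl)
    moreover have "(g has_real_derivative ?g' t) (at t)" if "t \<in> S" for t
      unfolding ab(3) using that a'(2) b'(2) h'(2)
      by (auto intro!: derivative_eq_intros simp: algebra_simps)
    ultimately show ?thesis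
      unfolding has_real_derivative_iff_has_vector_derivative by blast
  qed
  have "?P (\<lambda>t. sin (h t))"
    by (intro exI[of _ "\<lambda>t. 1"] exI[of _ "\<lambda>t. 0"] conjI smooth_on_const) simp
  moreover have "?P (\<lambda>t. cos (h t))"
    by (intro exI[of _ "\<lambda>t. 0"] exI[of _ "\<lambda>t. 1"] conjI smooth_on_const) simp
  ultimately show "smooth_on S (\<lambda>t. sin (h t))" "smooth_on S (\<lambda>t. cos (h t))"
    by (auto intro: smooth_on_coinduct[of ?P, OF _ step])
qed

definition flat_exp :: "real \<Rightarrow> real" where
  "flat_exp t = (if t > 0 then exp (- 1 / t) else 0)"

lemma poly_times_exp_recip_tendsto_0:
  "((\<lambda>t. poly p (1 / t) * exp (- 1 / t)) \<longlongrightarrow> (0::real)) (at_right 0)"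
proof -
  have "((\<lambda>x. \<Sum>i\<le>degree p. coeff p i * (x ^ i / exp x)) \<longlongrightarrow> (\<Sum>i\<le>degree p. coeff p i * 0)) at_top"
    by (intro tendsto_sum tendsto_mult tendsto_const tendsto_power_div_exp_0)
  then have "((\<lambda>x. poly p x * exp (- x)) \<longlongrightarrow> 0) at_top"
    by (simp add: poly_altdef sum_distrib_right exp_minus field_simps sum_divide_distrib)
  moreover have "filterlim (\<lambda>t::real. 1 / t) at_top (at_right 0)"
    using filterlim_inverse_at_top_right by (simp add: inverse_eq_divide)
  ultimately show ?thesis
    using filterlim_compose by (simp add: o_def)
qed

lemma has_real_derivative_poly_times_flat_exp:
  fixes p :: "real poly"
  defines "f q t \<equiv> if t > 0 then poly q (1 / t) * exp (- 1 / t) else 0"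
  shows "(f p has_real_derivative f ([:0, 0, 1:] * (p - pderiv p)) t) (at t)"
proof (cases "t = 0")
  case True
  have "((\<lambda>y. (f p y - f p 0) / (y - 0)) \<longlongrightarrow> 0) (at 0)"
  proof (rule filterlim_split_at_real)
    show "((\<lambda>y. (f p y - f p 0) / (y - 0)) \<longlongrightarrow> 0) (at_left 0)"
      by (rule tendsto_eventually, rule eventually_mono[OF eventually_at_left_real[of "-1" "0::real"]])
         (auto simp: f_def)
    show "((\<lambda>y. (f p y - f p 0) / (y - 0)) \<longlongrightarrow> 0) (at_right 0)"
      using poly_times_exp_recip_tendsto_0[of "pCons 0 p"]
      by (rule Lim_transform_eventually, intro eventually_mono[OF eventually_at_right_real[of 0 "1::real"]])
         (auto simp: f_def field_simps)
  qed
  then show ?thesis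
    using True by (simp add: has_field_derivative_iff f_def)
next
  case False
  have "((\<lambda>t. poly p (1 / t) * exp (- 1 / t)) has_real_derivative
      poly ([:0, 0, 1:] * (p - pderiv p)) (1 / t) * exp (- 1 / t)) (at t)"
    using False by (auto intro!: derivative_eq_intros poly_DERIV[THEN DERIV_chain2]
        simp: power2_eq_square field_simps)
  then have "(f p has_real_derivative poly ([:0, 0, 1:] * (p - pderiv p)) (1 / t) * exp (- 1 / t)) (at t)"
    if "t > 0"
    by (rule has_field_derivative_transform_within_open[where S = "{0<..}"]) (use that in \<open>auto simp: f_def\<close>)
  moreover have "(f p has_real_derivative 0) (at t)" if "t < 0"
    by (rule has_field_derivative_transform_within_open[where S = "{..<0}", OF DERIV_const])
       (use that in \<open>auto simp: f_def\<close>)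
  ultimately show ?thesis
    using False by (auto simp: f_def not_less_iff_gr_or_eq)
qed

lemma smooth_on_flat_exp: "smooth_on UNIV flat_exp"
proof (rule smooth_on_coinduct[where
    P = "\<lambda>g. \<exists>p::real poly. g = (\<lambda>t. if t > 0 then poly p (1 / t) * exp (- 1 / t) else 0)"])
  show "\<exists>p::real poly. flat_exp = (\<lambda>t. if t > 0 then poly p (1 / t) * exp (- 1 / t) else 0)"
    by (rule exI[of _ 1]) (auto simp: flat_exp_def)
qed (use has_real_derivative_poly_times_flat_exp in \<open>auto simp: has_real_derivative_iff_has_vector_derivative\<close>)

lemma flat_exp_symmetric_sum_bounds: "0 \<le> flat_exp t + flat_exp (- t)" "flat_exp t + flat_exp (- t) < 1"
  by (auto simp: flat_exp_def)

text \<open>For the unit tangent \<open>T = \<gamma>'\<close> of a 2-regular curve this says that \<open>\<gamma>', \<gamma>'', \<gamma>'''\<close> are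
  linearly independent.\<close>
definition second_derivative_independent_on :: "real set \<Rightarrow> (real \<Rightarrow> 'a::real_normed_vector) \<Rightarrow> bool" where
  "second_derivative_independent_on J T \<longleftrightarrow> (\<exists>T1 T2. \<forall>t\<in>J.
     (T has_vector_derivative T1 t) (at t) \<and> (T1 has_vector_derivative T2 t) (at t) \<and>
     (\<forall>a b. T2 t \<noteq> a *\<^sub>R T1 t + b *\<^sub>R T t))"

lemma second_derivative_independent_on_cong:
  assumes "open J" "\<And>t. t \<in> J \<Longrightarrow> S t = T t" "second_derivative_independent_on J T"
  shows "second_derivative_independent_on J S"
proof -
  obtain T1 T2 where T: "\<forall>t\<in>J. (T has_vector_derivative T1 t) (at t) \<and> (T1 has_vector_derivative T2 t) (at t)
      \<and> (\<forall>a b. T2 t \<noteq> a *\<^sub>R T1 t + b *\<^sub>R T t)"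
    using assms(3) unfolding second_derivative_independent_on_def by blast
  have "(S has_vector_derivative T1 t) (at t)" if "t \<in> J" for t
  proof -
    have "(T has_vector_derivative T1 t) (at t)"
      using T that by blast
    then show ?thesis
      by (rule has_vector_derivative_transform_within_open[OF _ assms(1) that]) (simp add: assms(2))
  qed
  then show ?thesis
    using T assms(2) unfolding second_derivative_independent_on_def by (intro exI[of _ T1] exI[of _ T2]) simp
qed

definition orthonormal3 :: "'a::real_inner \<Rightarrow> 'a \<Rightarrow> 'a \<Rightarrow> bool" where
  "orthonormal3 u v w \<longleftrightarrow> inner u u = 1 \<and> inner v v = 1 \<and> inner w w = 1 \<and>
     inner u v = 0 \<and> inner u w = 0 \<and> inner v w = 0"

lemma orthonormal_coefficients_unique:
  assumes "orthonormal3 u v w"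
    and "x *\<^sub>R u + y *\<^sub>R v + z *\<^sub>R w = x' *\<^sub>R u + y' *\<^sub>R v + z' *\<^sub>R w"
  shows "x = x'" "y = y'" "z = z'"
proof -
  have eq: "inner a (x *\<^sub>R u + y *\<^sub>R v + z *\<^sub>R w) = inner a (x' *\<^sub>R u + y' *\<^sub>R v + z' *\<^sub>R w)" for a
    using assms(2) by simp
  show "x = x'" "y = y'" "z = z'"
    using eq[of u] eq[of v] eq[of w] assms(1)
    by (simp_all add: orthonormal3_def inner_add_right inner_commute)
qed

lemma orthonormal3_axis:
  "i \<noteq> j \<Longrightarrow> i \<noteq> k \<Longrightarrow> j \<noteq> k \<Longrightarrow> orthonormal3 (axis i 1) (axis j 1) (axis k (1::real))"
  by (simp add: orthonormal3_def inner_axis_axis)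

lemma orthonormal3_rotate:
  assumes "orthonormal3 e1 e2 e3"
  shows "orthonormal3 (cos s *\<^sub>R e1 + sin s *\<^sub>R e2) (- sin s *\<^sub>R e1 + cos s *\<^sub>R e2) e3"
  using assms sin_cos_squared_add3[of s]
  by (simp add: orthonormal3_def inner_add_left inner_add_right inner_commute algebra_simps)

text \<open>The point of longitude \<open>s\<close> and latitude \<open>\<phi> s\<close> on the unit sphere of the span of an
  orthonormal triple \<open>e1, e2, e3\<close>.\<close>
definition latitude_curve :: "'a::real_vector \<Rightarrow> 'a \<Rightarrow> 'a \<Rightarrow> (real \<Rightarrow> real) \<Rightarrow> real \<Rightarrow> 'a" where
  "latitude_curve e1 e2 e3 \<phi> s = cos (\<phi> s) *\<^sub>R (cos s *\<^sub>R e1 + sin s *\<^sub>R e2) + sin (\<phi> s) *\<^sub>R e3"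

lemma norm_latitude_curve:
  assumes "orthonormal3 e1 e2 e3"
  shows "norm (latitude_curve e1 e2 e3 \<phi> s) = 1"
proof -
  define u where "u = cos s *\<^sub>R e1 + sin s *\<^sub>R e2"
  have "inner u u = 1" "inner u e3 = 0" "inner e3 e3 = 1"
    using orthonormal3_rotate[OF assms, of s, folded u_def] by (simp_all add: orthonormal3_def)
  then have "inner (cos (\<phi> s) *\<^sub>R u + sin (\<phi> s) *\<^sub>R e3) (cos (\<phi> s) *\<^sub>R u + sin (\<phi> s) *\<^sub>R e3) = 1"
    using sin_cos_squared_add3[of "\<phi> s"] by (simp add: inner_add_left inner_add_right inner_commute)
  then show ?thesis
    by (simp add: latitude_curve_def u_def norm_eq_sqrt_inner)
qed

lemma has_vector_derivative_rotating_frame: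
  fixes ex ey ez :: "'a::real_normed_vector"
  assumes "(A has_real_derivative A') (at s)" "(B has_real_derivative B') (at s)"
    "(C has_real_derivative C') (at s)"
  shows "((\<lambda>s. A s *\<^sub>R (cos s *\<^sub>R ex + sin s *\<^sub>R ey) + B s *\<^sub>R (- sin s *\<^sub>R ex + cos s *\<^sub>R ey) + C s *\<^sub>R ez)
    has_vector_derivative (A' - B s) *\<^sub>R (cos s *\<^sub>R ex + sin s *\<^sub>R ey)
      + (B' + A s) *\<^sub>R (- sin s *\<^sub>R ex + cos s *\<^sub>R ey) + C' *\<^sub>R ez) (at s)"
  using assms by (auto intro!: derivative_eq_intros simp: algebra_simps)

lemma latitude_second_derivative_not_in_span:
  assumes "orthonormal3 u w e" "0 < p" "p < pi / 2" "0 \<le> p''"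
  shows "(- cos p * p'\<^sup>2 - sin p * p'' - cos p) *\<^sub>R u + (- 2 * sin p * p') *\<^sub>R w
      + (- sin p * p'\<^sup>2 + cos p * p'') *\<^sub>R e
    \<noteq> a *\<^sub>R ((- sin p * p') *\<^sub>R u + cos p *\<^sub>R w + (cos p * p') *\<^sub>R e) + b *\<^sub>R (cos p *\<^sub>R u + sin p *\<^sub>R e)"
    (is "?T2 \<noteq> a *\<^sub>R ?T1 + b *\<^sub>R ?T")
proof
  assume "?T2 = a *\<^sub>R ?T1 + b *\<^sub>R ?T"
  then have "?T2 = (- a * sin p * p' + b * cos p) *\<^sub>R u + (a * cos p) *\<^sub>R w + (a * cos p * p' + b * sin p) *\<^sub>R e"
    by (simp add: algebra_simps)
  from orthonormal_coefficients_unique[OF assms(1) this]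
  have U: "- cos p * p'\<^sup>2 - sin p * p'' - cos p = - a * sin p * p' + b * cos p"
    and V: "- 2 * sin p * p' = a * cos p"
    and W: "- sin p * p'\<^sup>2 + cos p * p'' = a * cos p * p' + b * sin p" .
  from U W have "a * p' = sin p * cos p + p''"
    using sin_cos_squared_add[of p] by algebra
  with V have "cos p * (sin p * cos p + p'') = - 2 * sin p * p'\<^sup>2"
    by algebra
  moreover have "cos p > 0" "sin p > 0"
    using assms(2,3) by (auto intro!: cos_gt_zero_pi sin_gt_zero)
  then have "cos p * (sin p * cos p + p'') > 0"
    using assms(4) by (intro mult_pos_pos add_pos_nonneg) auto
  moreover have "- 2 * sin p * p'\<^sup>2 \<le> 0"
    using \<open>sin p > 0\<close> by simp
  ultimately show False
    by linarith
qed

lemma second_derivative_independent_on_latitude_curve: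
  assumes orthonormal: "orthonormal3 e1 e2 e3"
    and \<phi>: "\<And>s. s \<in> J \<Longrightarrow> (\<phi> has_real_derivative \<phi>' s) (at s)"
    and \<phi>': "\<And>s. s \<in> J \<Longrightarrow> (\<phi>' has_real_derivative \<phi>'' s) (at s)"
    and bounds: "\<And>s. s \<in> J \<Longrightarrow> 0 < \<phi> s \<and> \<phi> s < pi / 2 \<and> 0 \<le> \<phi>'' s"
  shows "second_derivative_independent_on J (latitude_curve e1 e2 e3 \<phi>)"
proof -
  define u w where "u s = cos s *\<^sub>R e1 + sin s *\<^sub>R e2" and "w s = - sin s *\<^sub>R e1 + cos s *\<^sub>R e2" for s
  note frame' = has_vector_derivative_rotating_frame[where ex = e1 and ey = e2 and ez = e3, folded u_def w_def]
  define T1 where "T1 s = (- sin (\<phi> s) * \<phi>' s) *\<^sub>R u s + cos (\<phi> s) *\<^sub>R w s + (cos (\<phi> s) * \<phi>' s) *\<^sub>R e3" for s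
  define T2 where "T2 s = (- cos (\<phi> s) * (\<phi>' s)\<^sup>2 - sin (\<phi> s) * \<phi>'' s - cos (\<phi> s)) *\<^sub>R u s
    + (- 2 * sin (\<phi> s) * \<phi>' s) *\<^sub>R w s + (- sin (\<phi> s) * (\<phi>' s)\<^sup>2 + cos (\<phi> s) * \<phi>'' s) *\<^sub>R e3" for s
  have T: "latitude_curve e1 e2 e3 \<phi> = (\<lambda>s. cos (\<phi> s) *\<^sub>R u s + 0 *\<^sub>R w s + sin (\<phi> s) *\<^sub>R e3)"
    by (simp add: fun_eq_iff latitude_curve_def u_def)
  have "(latitude_curve e1 e2 e3 \<phi> has_vector_derivative T1 s) (at s)" if "s \<in> J" for s
  proof -
    have "((\<lambda>s. cos (\<phi> s)) has_real_derivative - sin (\<phi> s) * \<phi>' s) (at s)"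
        "((\<lambda>s. sin (\<phi> s)) has_real_derivative cos (\<phi> s) * \<phi>' s) (at s)"
      using \<phi>[OF that] by (auto intro!: derivative_eq_intros)
    from frame'[OF this(1) DERIV_const[of 0] this(2)] show ?thesis
      unfolding T T1_def by (rule has_vector_derivative_eq_rhs) simp
  qed
  moreover have "(T1 has_vector_derivative T2 s) (at s)" if "s \<in> J" for s
  proof -
    have "((\<lambda>s. - sin (\<phi> s) * \<phi>' s) has_real_derivative - cos (\<phi> s) * (\<phi>' s)\<^sup>2 - sin (\<phi> s) * \<phi>'' s) (at s)"
        "((\<lambda>s. cos (\<phi> s)) has_real_derivative - sin (\<phi> s) * \<phi>' s) (at s)"
        "((\<lambda>s. cos (\<phi> s) * \<phi>' s) has_real_derivative - sin (\<phi> s) * (\<phi>' s)\<^sup>2 + cos (\<phi> s) * \<phi>'' s) (at s)"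
      using \<phi>[OF that] \<phi>'[OF that] by (auto intro!: derivative_eq_intros simp: power2_eq_square)
    from frame'[OF this] show ?thesis
      unfolding T1_def[abs_def] T2_def by (rule has_vector_derivative_eq_rhs) simp
  qed
  moreover have "T2 s \<noteq> a *\<^sub>R T1 s + b *\<^sub>R latitude_curve e1 e2 e3 \<phi> s" if "s \<in> J" for s a b
    using latitude_second_derivative_not_in_span[OF orthonormal3_rotate[OF orthonormal, of s, folded u_def w_def]]
      bounds[OF that]
    by (simp add: T T1_def T2_def)
  ultimately show ?thesis
    unfolding second_derivative_independent_on_def by blast
qed

lemma inner_vector_derivative_eq_0:
  fixes f :: "real \<Rightarrow> 'a::real_inner"
  assumes "open J" "t \<in> J" "\<And>s. s \<in> J \<Longrightarrow> inner (f s) v = 0"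
    and "(f has_vector_derivative f') (at t)"
  shows "inner f' v = 0"
proof -
  have "((\<lambda>s. inner (f s) v) has_real_derivative inner f' v) (at t)"
    using bounded_linear.has_vector_derivative[OF bounded_linear_inner_left assms(4)]
    by (simp add: has_real_derivative_iff_has_vector_derivative)
  moreover have "((\<lambda>s. inner (f s) v) has_real_derivative 0) (at t)"
    by (rule has_field_derivative_transform_within_open[OF DERIV_const assms(1,2)]) (simp add: assms(3))
  ultimately show ?thesis
    by (rule DERIV_unique)
qed

text \<open>Rows 0 and 1 of \<open>Z' = X Z\<close> for a coefficient matrix \<open>X\<close> of type F, together with \<open>T' \<noteq> 0\<close>.\<close>
definition type_F_equations_on ::
    "real set \<Rightarrow> (real \<Rightarrow> 'a::real_normed_vector) \<Rightarrow> (real \<Rightarrow> 'a) \<Rightarrow> (real \<Rightarrow> 'a) \<Rightarrow> (real \<Rightarrow> real) \<Rightarrow> (real \<Rightarrow> real) \<Rightarrow> bool"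
  where "type_F_equations_on I T Z1 Z2 x1 x2 \<longleftrightarrow> (\<forall>t\<in>I.
     (T has_vector_derivative x1 t *\<^sub>R Z1 t) (at t) \<and>
     (Z1 has_vector_derivative (- x1 t) *\<^sub>R T t + x2 t *\<^sub>R Z2 t) (at t) \<and>
     x1 differentiable (at t) \<and> x1 t \<noteq> 0)"

lemma type_F_equations_on_subset:
  "type_F_equations_on I T Z1 Z2 x1 x2 \<Longrightarrow> J \<subseteq> I \<Longrightarrow> type_F_equations_on J T Z1 Z2 x1 x2"
  unfolding type_F_equations_on_def by blast

lemma type_F_equations_on_cong:
  assumes "open I" "\<And>t. t \<in> I \<Longrightarrow> S t = T t" "type_F_equations_on I T Z1 Z2 x1 x2"
  shows "type_F_equations_on I S Z1 Z2 x1 x2"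
  unfolding type_F_equations_on_def
proof
  fix t assume t: "t \<in> I"
  have "(T has_vector_derivative x1 t *\<^sub>R Z1 t) (at t)"
    using assms(3) t unfolding type_F_equations_on_def by blast
  then have "(S has_vector_derivative x1 t *\<^sub>R Z1 t) (at t)"
    by (rule has_vector_derivative_transform_within_open[OF _ assms(1) t]) (simp add: assms(2))
  then show "(S has_vector_derivative x1 t *\<^sub>R Z1 t) (at t) \<and>
      (Z1 has_vector_derivative (- x1 t) *\<^sub>R S t + x2 t *\<^sub>R Z2 t) (at t) \<and>
      x1 differentiable (at t) \<and> x1 t \<noteq> 0"
    using assms(3) t by (simp add: type_F_equations_on_def assms(2))
qed

lemma type_F_normals_orthogonal:
  fixes T Z1 Z2 :: "real \<Rightarrow> 'a::real_inner"
  assumes "open J" "type_F_equations_on J T Z1 Z2 x1 x2"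
    and independent: "second_derivative_independent_on J T"
    and perp: "\<And>t. t \<in> J \<Longrightarrow> inner (T t) v = 0"
    and t: "t \<in> J"
  shows "inner (Z1 t) v = 0 \<and> inner (Z2 t) v = 0"
proof -
  have T': "\<And>s. s \<in> J \<Longrightarrow> (T has_vector_derivative x1 s *\<^sub>R Z1 s) (at s)"
    and Z1': "(Z1 has_vector_derivative (- x1 t) *\<^sub>R T t + x2 t *\<^sub>R Z2 t) (at t)"
    and x1': "(x1 has_real_derivative deriv x1 t) (at t)"
    and x1_nonzero: "x1 t \<noteq> 0"
    using assms(2) t by (auto simp: type_F_equations_on_def DERIV_deriv_iff_real_differentiable)
  obtain T1 T2 where T1: "\<And>s. s \<in> J \<Longrightarrow> (T has_vector_derivative T1 s) (at s)"
    and T2: "(T1 has_vector_derivative T2 t) (at t)"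
    and off_span: "\<And>a b. T2 t \<noteq> a *\<^sub>R T1 t + b *\<^sub>R T t"
    using independent t unfolding second_derivative_independent_on_def by blast
  have T1_eq: "T1 s = x1 s *\<^sub>R Z1 s" if "s \<in> J" for s
    using vector_derivative_unique_at[OF T1[OF that] T'[OF that]] .
  have "((\<lambda>s. x1 s *\<^sub>R Z1 s) has_vector_derivative
      x1 t *\<^sub>R ((- x1 t) *\<^sub>R T t + x2 t *\<^sub>R Z2 t) + deriv x1 t *\<^sub>R Z1 t) (at t)"
    using x1' Z1' by (rule has_vector_derivative_scaleR)
  moreover have "((\<lambda>s. x1 s *\<^sub>R Z1 s) has_vector_derivative T2 t) (at t)"
    by (rule has_vector_derivative_transform_within_open[OF T2 assms(1) t]) (simp add: T1_eq)
  ultimately have T2_eq: "T2 t = x1 t *\<^sub>R ((- x1 t) *\<^sub>R T t + x2 t *\<^sub>R Z2 t) + deriv x1 t *\<^sub>R Z1 t"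
    using vector_derivative_unique_at by blast
  have T1_perp: "inner (T1 s) v = 0" if "s \<in> J" for s
    using inner_vector_derivative_eq_0[OF assms(1) that perp T1[OF that]] .
  then have "inner (T2 t) v = 0"
    using inner_vector_derivative_eq_0[OF assms(1) t _ T2] by blast
  have Z1_perp: "inner (Z1 t) v = 0"
    using T1_perp[OF t] x1_nonzero by (simp add: T1_eq[OF t])
  have "x2 t \<noteq> 0"
  proof
    assume "x2 t = 0"
    then have "T2 t = (deriv x1 t / x1 t) *\<^sub>R T1 t + (- (x1 t)\<^sup>2) *\<^sub>R T t"
      using x1_nonzero by (simp add: T2_eq T1_eq[OF t] power2_eq_square)
    with off_span show False
      by blast
  qed
  then show ?thesis
    using \<open>inner (T2 t) v = 0\<close> Z1_perp perp[OF t] x1_nonzero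
    by (simp add: T2_eq inner_add_left inner_diff_left)
qed

lemma type_F_normals_orthogonal_on_closure:
  fixes T Z1 Z2 :: "real \<Rightarrow> 'a::real_inner"
  assumes "type_F_equations_on I T Z1 Z2 x1 x2" "continuous_on I Z2"
    and J: "open J" "closure J \<subseteq> I"
    and "second_derivative_independent_on J T" "\<And>t. t \<in> J \<Longrightarrow> inner (T t) v = 0"
    and "t \<in> closure J"
  shows "inner (Z1 t) v = 0 \<and> inner (Z2 t) v = 0"
proof -
  have "type_F_equations_on J T Z1 Z2 x1 x2"
    using assms(1) J(2) closure_subset by (blast intro: type_F_equations_on_subset)
  then have on_J: "inner (Z1 s) v = 0" "inner (Z2 s) v = 0" if "s \<in> J" for s
    using type_F_normals_orthogonal[OF J(1) _ assms(5,6) that] by auto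
  have "continuous_on I Z1"
    using assms(1) unfolding type_F_equations_on_def
    by (blast intro: continuous_at_imp_continuous_on has_vector_derivative_continuous)
  then have Z1_cont: "continuous_on (closure J) (\<lambda>s. inner (Z1 s) v)"
    and Z2_cont: "continuous_on (closure J) (\<lambda>s. inner (Z2 s) v)"
    using assms(2) J(2) by (auto intro!: continuous_intros intro: continuous_on_subset)
  show ?thesis
  proof
    show "inner (Z1 t) v = 0"
      by (rule continuous_constant_on_closure[OF Z1_cont _ assms(7)]) (rule on_J)
    show "inner (Z2 t) v = 0"
      by (rule continuous_constant_on_closure[OF Z2_cont _ assms(7)]) (rule on_J)
  qed
qed

lemma is_frame_orthonormal3:
  assumes "is_frame I \<gamma> Z" "t \<in> I" "i < 4" "j < 4" "k < 4" "i \<noteq> j" "i \<noteq> k" "j \<noteq> k"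
  shows "orthonormal3 (Z i t) (Z j t) (Z k t)"
proof -
  have "inner (Z a t) (Z b t) = (if a = b then 1 else 0)" if "a < 4" "b < 4" for a b
    using assms(1,2) that by (simp add: is_frame_def)
  then show ?thesis
    using assms(3-8) by (simp add: orthonormal3_def)
qed

lemma frame_type_F_first_rows:
  assumes "two_regular I \<gamma>" "frame_type_F I \<gamma> Z"
  obtains Z1 Z2 x1 x2 where
    "type_F_equations_on I (tangent \<gamma>) Z1 Z2 x1 x2" "continuous_on I Z2"
    "\<And>t. t \<in> I \<Longrightarrow> orthonormal3 (tangent \<gamma> t) (Z1 t) (Z2 t)"
proof -
  obtain \<sigma> x1 x2 x3 where frame: "is_frame I \<gamma> Z" and \<sigma>: "\<sigma> permutes {1, 2, 3}"
    and x1: "smooth_on I x1"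
    and rows: "\<And>t i. t \<in> I \<Longrightarrow> i < 4 \<Longrightarrow>
      (Z (\<sigma> i) has_vector_derivative (\<Sum>j<4. F_matrix (x1 t) (x2 t) (x3 t) i j *\<^sub>R Z (\<sigma> j) t)) (at t)"
    using assms(2) unfolding frame_type_F_def coeff_matrix_def by blast
  have I: "open I"
    using assms(1) by (simp add: two_regular_def unit_speed_curve_def open_interval_def)
  have \<sigma>0: "\<sigma> 0 = 0"
    using permutes_not_in[OF \<sigma>] by simp
  have \<sigma>12: "\<sigma> 1 \<in> {1, 2, 3}" "\<sigma> 2 \<in> {1, 2, 3}" "\<sigma> 1 \<noteq> \<sigma> 2"
    using permutes_in_image[OF \<sigma>] permutes_inj[OF \<sigma>] by (auto dest: injD)
  define Z1 Z2 where "Z1 = Z (\<sigma> 1)" and "Z2 = Z (\<sigma> 2)"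
  have Z0: "Z 0 t = tangent \<gamma> t" if "t \<in> I" for t
    using frame that by (simp add: is_frame_def)
  have T': "(tangent \<gamma> has_vector_derivative x1 t *\<^sub>R Z1 t) (at t)" if "t \<in> I" for t
  proof -
    have "(Z 0 has_vector_derivative x1 t *\<^sub>R Z1 t) (at t)"
      using rows[OF that, of 0] \<sigma>0 by (simp add: F_matrix_def eval_nat_numeral Z1_def)
    then show ?thesis
      by (rule has_vector_derivative_transform_within_open[OF _ I that]) (simp add: Z0)
  qed
  have "type_F_equations_on I (tangent \<gamma>) Z1 Z2 x1 x2"
    unfolding type_F_equations_on_def
  proof (intro ballI conjI T')
    fix t assume t: "t \<in> I"
    show "(Z1 has_vector_derivative (- x1 t) *\<^sub>R tangent \<gamma> t + x2 t *\<^sub>R Z2 t) (at t)"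
      using rows[OF t, of 1] \<sigma>0 Z0[OF t] by (simp add: F_matrix_def eval_nat_numeral Z1_def Z2_def)
    show "x1 differentiable (at t)"
      using smooth_on_real_derivative[OF x1 I] t by (metis real_differentiable_def)
    show "x1 t \<noteq> 0"
      using assms(1) t vector_derivative_at[OF T'[OF t]] by (auto simp: two_regular_def)
  qed
  moreover have "continuous_on I Z2"
    using rows[of _ 2] unfolding Z2_def
    by (auto intro!: continuous_at_imp_continuous_on has_vector_derivative_continuous)
  moreover have "orthonormal3 (tangent \<gamma> t) (Z1 t) (Z2 t)" if "t \<in> I" for t
    using is_frame_orthonormal3[OF frame that, of 0 "\<sigma> 1" "\<sigma> 2"] \<sigma>12
    by (auto simp: Z1_def Z2_def Z0[OF that])
  ultimately show ?thesis
    by (rule that)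
qed

definition example_tangent :: "real \<Rightarrow> real^4" where
  "example_tangent s = cos (flat_exp s + flat_exp (- s)) *\<^sub>R (cos s *\<^sub>R axis 1 1 + sin s *\<^sub>R axis 2 1)
     + sin (flat_exp s) *\<^sub>R axis 3 1 + sin (flat_exp (- s)) *\<^sub>R axis 4 1"

definition example_curve :: "real \<Rightarrow> real^4" where
  "example_curve t = integral {-1..t} example_tangent"

lemma smooth_on_example_tangent: "smooth_on UNIV example_tangent"
  unfolding example_tangent_def[abs_def]
  by (intro smooth_on_add smooth_on_scaleR smooth_on_sin_cos smooth_on_const smooth_on_id
      smooth_on_flat_exp smooth_on_reflect open_UNIV)

lemma example_tangent_pos:
  "s > 0 \<Longrightarrow> example_tangent s = latitude_curve (axis 1 1) (axis 2 1) (axis 3 1) (\<lambda>s. exp (- 1 / s)) s"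
  by (simp add: example_tangent_def latitude_curve_def flat_exp_def)

lemma example_tangent_neg:
  "s < 0 \<Longrightarrow> example_tangent s = latitude_curve (axis 1 1) (axis 2 1) (axis 4 1) (\<lambda>s. exp (1 / s)) s"
  by (simp add: example_tangent_def latitude_curve_def flat_exp_def)

lemma example_tangent_0: "example_tangent 0 = axis 1 1"
  by (simp add: example_tangent_def flat_exp_def)

lemma norm_example_tangent: "norm (example_tangent s) = 1"
  by (cases s "0::real" rule: linorder_cases)
     (simp_all add: example_tangent_pos example_tangent_neg example_tangent_0 norm_latitude_curve orthonormal3_axis)

lemma example_tangent_derivative_nonzero:
  obtains T' where "\<And>s. (example_tangent has_vector_derivative T' s) (at s)" "\<And>s. T' s \<noteq> 0"
proof -
  obtain T' where T': "\<And>s. (example_tangent has_vector_derivative T' s) (at s)"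
    using smooth_on_derivative[OF smooth_on_example_tangent open_UNIV] by (metis UNIV_I)
  define u w :: "real \<Rightarrow> real^4"
    where "u s = cos s *\<^sub>R axis 1 1 + sin s *\<^sub>R axis 2 1" and "w s = - sin s *\<^sub>R axis 1 1 + cos s *\<^sub>R axis 2 1" for s
  have w': "(w has_vector_derivative - u s) (at s)" for s
    unfolding u_def w_def by (auto intro!: derivative_eq_intros simp: algebra_simps)
  have positive: "inner (T' s) (w s) > 0" for s
  proof -
    txt \<open>Since \<open>T \<bottom> w\<close> and \<open>w' = - u\<close>, we get \<open>\<langle>T', w\<rangle> = \<langle>T, u\<rangle>\<close>.\<close>
    have "((\<lambda>s. inner (example_tangent s) (w s)) has_vector_derivative
        inner (example_tangent s) (- u s) + inner (T' s) (w s)) (at s)"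
      by (rule bounded_bilinear.has_vector_derivative[OF bounded_bilinear_inner T' w'])
    moreover have "(\<lambda>s. inner (example_tangent s) (w s)) = (\<lambda>s. 0)"
      by (simp add: fun_eq_iff example_tangent_def u_def w_def inner_add_left inner_add_right
          inner_axis_axis algebra_simps)
    ultimately have "inner (example_tangent s) (- u s) + inner (T' s) (w s) = 0"
      using vector_derivative_unique_at[OF _ has_vector_derivative_const] by metis
    then have "inner (T' s) (w s) = inner (example_tangent s) (u s)"
      by simp
    also have "\<dots> = cos (flat_exp s + flat_exp (- s))"
      by (simp add: example_tangent_def u_def inner_add_left inner_add_right inner_axis_axis algebra_simps)
        (use sin_cos_squared_add3[of s] in algebra)
    also have "\<dots> > 0"
      using flat_exp_symmetric_sum_bounds[of s] pi_gt3 by (intro cos_gt_zero_pi) auto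
    finally show ?thesis .
  qed
  show ?thesis
  proof (rule that[OF T'])
    show "T' s \<noteq> 0" for s
      using positive[of s] by auto
  qed
qed

lemma second_derivative_independent_on_example_tangent_pos:
  "second_derivative_independent_on {0<..<1/2} example_tangent"
proof (rule second_derivative_independent_on_cong[OF _ example_tangent_pos])
  show "second_derivative_independent_on {0<..<1/2}
      (latitude_curve (axis 1 1) (axis 2 1) (axis 3 1 :: real^4) (\<lambda>s. exp (- 1 / s)))"
  proof (rule second_derivative_independent_on_latitude_curve)
    fix s :: real assume s: "s \<in> {0<..<1/2}"
    show "((\<lambda>s. exp (- 1 / s)) has_real_derivative exp (- 1 / s) / s\<^sup>2) (at s)"
        "((\<lambda>s. exp (- 1 / s) / s\<^sup>2) has_real_derivative exp (- 1 / s) * (1 - 2 * s) / s ^ 4) (at s)"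
      using s by (auto intro!: derivative_eq_intros simp: field_simps eval_nat_numeral)
    have "exp (- 1 / s) < 1"
      using s by simp
    then show "0 < exp (- 1 / s) \<and> exp (- 1 / s) < pi / 2 \<and> 0 \<le> exp (- 1 / s) * (1 - 2 * s) / s ^ 4"
      using s pi_gt3 by (auto simp del: exp_less_one_iff)
  qed (simp add: orthonormal3_axis)
qed auto

lemma second_derivative_independent_on_example_tangent_neg:
  "second_derivative_independent_on {-1/2<..<0} example_tangent"
proof (rule second_derivative_independent_on_cong[OF _ example_tangent_neg])
  show "second_derivative_independent_on {-1/2<..<0}
      (latitude_curve (axis 1 1) (axis 2 1) (axis 4 1 :: real^4) (\<lambda>s. exp (1 / s)))"
  proof (rule second_derivative_independent_on_latitude_curve)
    fix s :: real assume s: "s \<in> {-1/2<..<0}"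
    show "((\<lambda>s. exp (1 / s)) has_real_derivative - exp (1 / s) / s\<^sup>2) (at s)"
        "((\<lambda>s. - exp (1 / s) / s\<^sup>2) has_real_derivative exp (1 / s) * (1 + 2 * s) / s ^ 4) (at s)"
      using s by (auto intro!: derivative_eq_intros simp: field_simps eval_nat_numeral)
    have "exp (1 / s) < 1"
      using s by (simp add: divide_neg_pos)
    then show "0 < exp (1 / s) \<and> exp (1 / s) < pi / 2 \<and> 0 \<le> exp (1 / s) * (1 + 2 * s) / s ^ 4"
      using s pi_gt3 by (auto simp del: exp_less_one_iff)
  qed (simp add: orthonormal3_axis)
qed auto

lemma example_curve_derivative:
  assumes "t \<in> {-1<..<1}"
  shows "(example_curve has_vector_derivative example_tangent t) (at t)"
proof -
  have "continuous_on {-1..1} example_tangent"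
    using smooth_on_derivative[OF smooth_on_example_tangent open_UNIV]
    by (metis UNIV_I continuous_at_imp_continuous_on has_vector_derivative_continuous)
  then have "(example_curve has_vector_derivative example_tangent t) (at t within {-1..1})"
    unfolding example_curve_def[abs_def] using assms by (intro integral_has_vector_derivative) auto
  moreover have "at t within {-1..1} = at t"
    using assms by (intro at_within_interior) auto
  ultimately show ?thesis
    by simp
qed

lemma tangent_example_curve: "t \<in> {-1<..<1} \<Longrightarrow> tangent example_curve t = example_tangent t"
  unfolding tangent_def using example_curve_derivative by (rule vector_derivative_at)

lemma two_regular_example_curve: "two_regular {-1<..<1} example_curve"
  unfolding two_regular_def unit_speed_curve_def
proof (intro conjI ballI)
  show "open_interval {-1<..<1::real}"
    by (auto simp: open_interval_def is_interval_oo intro!: exI[of _ 0])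
  obtain D where D0: "\<And>t. D 0 t = example_tangent t"
    and D: "\<And>n t. (D n has_vector_derivative D (Suc n) t) (at t)"
    using smooth_on_example_tangent unfolding smooth_on_def by blast
  show "smooth_on {-1<..<1} example_curve"
    unfolding smooth_on_def using D D0 example_curve_derivative
    by (intro exI[of _ "\<lambda>n. case n of 0 \<Rightarrow> example_curve | Suc m \<Rightarrow> D m"]) (auto split: nat.split)
  fix t :: real assume t: "t \<in> {-1<..<1}"
  show "norm (vector_derivative example_curve (at t)) = 1"
    using tangent_example_curve[OF t] norm_example_tangent by (simp add: tangent_def)
  obtain T' where T': "\<And>s. (example_tangent has_vector_derivative T' s) (at s)" "\<And>s. T' s \<noteq> 0"
    using example_tangent_derivative_nonzero by metis
  have "(tangent example_curve has_vector_derivative T' t) (at t)"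
    by (rule has_vector_derivative_transform_within_open[OF T'(1) _ t]) (auto simp: tangent_example_curve)
  then show "vector_derivative (tangent example_curve) (at t) \<noteq> 0"
    using T'(2) by (simp add: vector_derivative_at)
qed

lemma orthonormal3_axis_1_not_perp_axes_3_4:
  fixes y z :: "real^4"
  assumes "orthonormal3 (axis 1 1) y z"
  shows "inner y (axis 3 1) \<noteq> 0 \<or> inner z (axis 3 1) \<noteq> 0 \<or> inner y (axis 4 1) \<noteq> 0 \<or> inner z (axis 4 1) \<noteq> 0"
proof (rule ccontr)
  assume "\<not> ?thesis"
  with assms have "y $ 1 = 0" "y $ 3 = 0" "y $ 4 = 0" "z $ 1 = 0" "z $ 3 = 0" "z $ 4 = 0"
      "inner y y = 1" "inner z z = 1" "inner y z = 0"
    by (auto simp: orthonormal3_def cart_eq_inner_axis inner_commute)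
  then have "(y $ 2)\<^sup>2 = 1" "(z $ 2)\<^sup>2 = 1" "y $ 2 * z $ 2 = 0"
    by (simp_all add: inner_vec_def sum_4 power2_eq_square)
  then show False
    by (auto simp: power2_eq_square)
qed

lemma example_curve_no_frame_type_F: "\<not> frame_type_F {-1<..<1} example_curve Z"
proof
  let ?I = "{-1<..<1::real}"
  assume "frame_type_F ?I example_curve Z"
  then obtain Z1 Z2 x1 x2 where equations: "type_F_equations_on ?I (tangent example_curve) Z1 Z2 x1 x2"
    and continuous: "continuous_on ?I Z2" and orthonormal: "orthonormal3 (tangent example_curve 0) (Z1 0) (Z2 0)"
    by (rule frame_type_F_first_rows[OF two_regular_example_curve]) auto
  have "type_F_equations_on ?I example_tangent Z1 Z2 x1 x2"
    using type_F_equations_on_cong[OF _ _ equations] tangent_example_curve by auto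
  note normals_perp = type_F_normals_orthogonal_on_closure[OF this continuous]
  have "inner (Z1 0) (axis 4 1) = 0 \<and> inner (Z2 0) (axis 4 1) = 0"
    by (rule normals_perp[OF _ _ second_derivative_independent_on_example_tangent_pos])
       (auto simp: example_tangent_pos latitude_curve_def inner_add_left inner_axis_axis)
  moreover have "inner (Z1 0) (axis 3 1) = 0 \<and> inner (Z2 0) (axis 3 1) = 0"
    by (rule normals_perp[OF _ _ second_derivative_independent_on_example_tangent_neg])
       (auto simp: example_tangent_neg latitude_curve_def inner_add_left inner_axis_axis)
  moreover have "orthonormal3 (axis 1 1) (Z1 0) (Z2 0)"
    using orthonormal tangent_example_curve[of 0] by (simp add: example_tangent_0)
  ultimately show False
    using orthonormal3_axis_1_not_perp_axes_3_4 by blast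
qed

theorem theorem3:
  shows "\<exists>(I :: real set) (\<gamma> :: real \<Rightarrow> real^4).
           two_regular I \<gamma> \<and> \<not> (\<exists>Z. frame_type_F I \<gamma> Z)"
  using two_regular_example_curve example_curve_no_frame_type_F by blast

end
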